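(* Let $V$ be a finite-dimensional real inner product space with unit sphere $S$, let $M\subset V$ be a lattice with $M\otimes_{\mathbf Z}\mathbf R=V$ such that the inner product takes integral values on $M\times M$, let $\sigma\subset V$ be a rational polyhedral cone with respect to $M$, and let $f:V\to\mathbf R$ be a linear functional taking integral values on $M$. If $f$ takes a negative value on $\sigma$ and attains its minimum on $S\cap\sigma$ at $s$, then the ray $\mathbf R_{>0}\cdot s$ contains a unique nonzero indivisible lattice point of $M$.
   Context: A polyhedral cone is a finite intersection of half-spaces $\{g\ge0\}$ with $g$ linear; it is rational with respect to $M$ if it can be cut out by half-spaces defined by linear functionals taking integral values on $M$. A lattice point $m\in M$ is indivisible if $m=Nm'$ with $N\in\mathbf N$, $m'\in M$ implies $N=1$. *)

theory Defs
  imports "HOL-Analysis.Analysis"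
begin

text \<open>A full-rank lattice in V: the set of integral linear combinations of a basis of V
  (equivalently a discrete subgroup M with M tensor R = V).\<close>
definition full_lattice :: "'a::euclidean_space set \<Rightarrow> bool" where
  "full_lattice M \<longleftrightarrow> (\<exists>B. independent B \<and> span B = UNIV \<and>
      M = {x. \<exists>c::'a \<Rightarrow> int. x = (\<Sum>b\<in>B. of_int (c b) *\<^sub>R b)})"

definition integral_on :: "('a \<Rightarrow> real) \<Rightarrow> 'a set \<Rightarrow> bool" where
  "integral_on g M \<longleftrightarrow> (\<forall>m\<in>M. g m \<in> \<int>)"

definition rational_polyhedral_cone :: "'a::euclidean_space set \<Rightarrow> 'a set \<Rightarrow> bool" where
  "rational_polyhedral_cone M \<sigma> \<longleftrightarrow> (\<exists>G. finite G \<and> (\<forall>g\<in>G. linear g \<and> integral_on g M) \<and>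
      \<sigma> = {x. \<forall>g\<in>G. g x \<ge> 0})"

definition indivisible :: "'a::real_vector set \<Rightarrow> 'a \<Rightarrow> bool" where
  "indivisible M m \<longleftrightarrow> (\<forall>(N::nat) m'. m' \<in> M \<and> m = of_nat N *\<^sub>R m' \<longrightarrow> N = 1)"

end

(*
  The minimizer s of f on the sphere within the cone satisfies a Lagrange condition: by
  first-order optimality along lines through s that stay in the cone, f v = f(s) (s . v)
  for every v killed by the constraints active at s.  Hence f(s) s is the component,
  orthogonal to the gradients of the active constraints, of the gradient of f.  Since the
  inner product is integral on M, Gram-Schmidt can be run inside M tensor Q, so all these
  gradients and projections are rational: some positive multiple of s lies in M.
  Integrality of the inner product also makes the lattice points on the ray discrete, so
  they are the multiples of the least one, which is the unique indivisible point.
*)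
theory Submission
  imports Defs
begin

lemma eventually_in_polyhedral_cone_along:
  fixes G :: "('a::real_vector \<Rightarrow> real) set"
  assumes "finite G" "\<forall>g\<in>G. linear g" "\<forall>g\<in>G. 0 \<le> g s"
    and "\<forall>g\<in>G. g s = 0 \<longrightarrow> g v = 0"
  shows "\<forall>\<^sub>F e in at (0::real). \<forall>g\<in>G. 0 \<le> g (s + e *\<^sub>R v)"
proof (rule eventually_ball_finite[OF assms(1)], rule ballI)
  fix g assume "g \<in> G"
  then have g_line: "g (s + e *\<^sub>R v) = g s + e * g v" for e
    using assms(2) by (simp add: linear_add linear_scale)
  show "\<forall>\<^sub>F e in at 0. 0 \<le> g (s + e *\<^sub>R v)"
  proof (cases "g s = 0")
    case True
    then have "g v = 0" using assms(4) \<open>g \<in> G\<close> by blast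
    then show ?thesis using True by (simp add: g_line)
  next
    case False
    then have "0 < g s" using assms(3) \<open>g \<in> G\<close> by force
    moreover have "((\<lambda>e. g s + e * g v) \<longlongrightarrow> g s + 0 * g v) (at 0)"
      by (intro tendsto_intros)
    ultimately have "\<forall>\<^sub>F e in at 0. 0 < g s + e * g v"
      by (intro order_tendstoD(1)) auto
    then show ?thesis by eventually_elim (simp add: g_line)
  qed
qed

lemma has_real_derivative_norm_along:
  fixes s v :: "'a::real_inner"
  assumes "norm s = 1"
  shows "((\<lambda>e. norm (s + e *\<^sub>R v)) has_real_derivative s \<bullet> v) (at 0)"
proof -
  have "((\<lambda>e. s + e *\<^sub>R v) has_derivative (\<lambda>e. e *\<^sub>R v)) (at 0)"
    by (intro derivative_eq_intros) auto
  moreover have "(norm has_derivative (\<lambda>h. h \<bullet> sgn s)) (at (s + 0 *\<^sub>R v))"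
    using has_derivative_norm[of s] assms by force
  ultimately have "((\<lambda>e. norm (s + e *\<^sub>R v)) has_derivative (\<lambda>e. (e *\<^sub>R v) \<bullet> sgn s)) (at 0)"
    by (rule has_derivative_compose)
  then show ?thesis using assms
    by (simp add: has_field_derivative_def sgn_div_norm inner_commute mult_commute_abs)
qed

lemma polyhedral_cone_sphere_minimizer_first_order:
  fixes f :: "'a::real_inner \<Rightarrow> real" and G :: "('a \<Rightarrow> real) set"
  assumes "finite G" "\<forall>g\<in>G. linear g" "\<sigma> = {x. \<forall>g\<in>G. 0 \<le> g x}" "linear f"
    and "s \<in> \<sigma>" "norm s = 1" "\<forall>x\<in>\<sigma>. f s * norm x \<le> f x"
    and "\<forall>g\<in>G. g s = 0 \<longrightarrow> g v = 0"
  shows "f v = f s * (s \<bullet> v)"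
proof -
  define \<phi> where "\<phi> e = f s + e * f v - f s * norm (s + e *\<^sub>R v)" for e :: real
  have f_line: "f (s + e *\<^sub>R v) = f s + e * f v" for e
    using assms(4) by (simp add: linear_add linear_scale)
  have "\<forall>g\<in>G. 0 \<le> g s"
    using assms(3,5) by auto
  with assms(1,2,8) have "\<forall>\<^sub>F e in at 0. \<forall>g\<in>G. 0 \<le> g (s + e *\<^sub>R v)"
    by (intro eventually_in_polyhedral_cone_along)
  then have local_min: "\<forall>\<^sub>F e in at 0. \<phi> 0 \<le> \<phi> e"
  proof eventually_elim
    case (elim e)
    then have "f s * norm (s + e *\<^sub>R v) \<le> f (s + e *\<^sub>R v)"
      using assms(3,7) by blast
    then show ?case using assms(6) by (simp add: \<phi>_def f_line)
  qed
  have "(\<phi> has_real_derivative f v - f s * (s \<bullet> v)) (at 0)"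
    unfolding \<phi>_def using has_real_derivative_norm_along[OF assms(6)]
    by (auto intro!: derivative_eq_intros)
  with local_min have "(\<lambda>h. h * (f v - f s * (s \<bullet> v))) = (\<lambda>h. 0)"
    unfolding has_field_derivative_def by (intro has_derivative_local_min) (auto simp: mult_commute_abs)
  then show ?thesis by (metis mult_1 right_minus_eq)
qed

lemma cone_sphere_minimizer_bound:
  fixes f :: "'a::real_normed_vector \<Rightarrow> real"
  assumes "linear f" "cone \<sigma>" "\<forall>y\<in>sphere 0 1 \<inter> \<sigma>. f s \<le> f y" "x \<in> \<sigma>"
  shows "f s * norm x \<le> f x"
proof (cases "x = 0")
  case True
  then show ?thesis using assms(1) by (simp add: linear_0)
next
  case False
  then have "(1 / norm x) *\<^sub>R x \<in> sphere 0 1 \<inter> \<sigma>"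
    using assms(2,4) unfolding cone_def by simp
  then have "f s \<le> f x / norm x"
    using assms(1,3) by (force simp: linear_scale)
  then show ?thesis
    using False by (simp add: field_simps)
qed

lemma orthogonal_expansion:
  fixes E :: "'a::euclidean_space set"
  assumes "pairwise orthogonal E" "x \<in> span E"
  shows "(\<Sum>e\<in>E. (e \<bullet> x / (e \<bullet> e)) *\<^sub>R e) = x"
proof -
  define d where "d = x - (\<Sum>e\<in>E. (e \<bullet> x / (e \<bullet> e)) *\<^sub>R e)"
  have "(\<Sum>e\<in>E. (e \<bullet> x / (e \<bullet> e)) *\<^sub>R e) \<in> span E"
    by (intro span_sum span_scale span_base)
  then have "d \<in> span E"
    unfolding d_def using assms(2) by (intro span_diff)
  then have "orthogonal d d"
    unfolding d_def by (rule Gram_Schmidt_step[OF assms(1)])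
  then show ?thesis by (simp add: d_def orthogonal_def)
qed

lemma orthogonal_residual_eq_scaled:
  fixes w p s :: "'a::real_inner"
  assumes "\<forall>v. (\<forall>u\<in>U. u \<bullet> v = 0) \<longrightarrow> w \<bullet> v = c * (s \<bullet> v)"
    and "\<forall>u\<in>U. u \<bullet> s = 0" "p \<in> span U" "\<forall>u\<in>U. (w - p) \<bullet> u = 0"
  shows "w - p = c *\<^sub>R s"
proof -
  define d where "d = w - p - c *\<^sub>R s"
  have d_orth: "\<forall>u\<in>U. u \<bullet> d = 0"
    using assms(2,4) by (simp add: d_def inner_diff_right inner_commute)
  then have "w \<bullet> d = c * (s \<bullet> d)"
    using assms(1) by blast
  moreover have "p \<bullet> d = 0"
    using orthogonal_to_span[OF assms(3), of d] d_orth
    by (simp add: orthogonal_def inner_commute)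
  ultimately have "d \<bullet> d = 0"
    by (simp add: d_def inner_diff_left)
  then show ?thesis by (simp add: d_def)
qed

lemma unique_indivisible_on_ray_generated:
  fixes M :: "'a::real_vector set"
  assumes "m0 \<in> M" "m0 \<noteq> 0" "0 < t0" "m0 = t0 *\<^sub>R s"
    and generated: "\<And>m. m \<in> M \<Longrightarrow> \<exists>t>0. m = t *\<^sub>R s \<Longrightarrow> \<exists>q::nat. m = real q *\<^sub>R m0"
  shows "\<exists>!m. m \<in> M \<and> m \<noteq> 0 \<and> indivisible M m \<and> (\<exists>t>0. m = t *\<^sub>R s)"
proof (rule ex1I[of _ m0])
  have "N = 1" if m': "m' \<in> M" "m0 = real N *\<^sub>R m'" for N m'
  proof -
    have "N \<noteq> 0" using m'(2) assms(2) by auto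
    then have "m' = inverse (real N) *\<^sub>R m0"
      using m'(2) by simp
    then have "m' = (t0 / real N) *\<^sub>R s"
      using assms(4) by (simp add: divide_inverse mult.commute)
    moreover have "0 < t0 / real N"
      using assms(3) \<open>N \<noteq> 0\<close> by simp
    ultimately obtain q :: nat where "m' = real q *\<^sub>R m0"
      using generated[OF m'(1)] by blast
    with m'(2) have "1 *\<^sub>R m0 = (real N * real q) *\<^sub>R m0"
      by (metis scaleR_one scaleR_scaleR)
    with assms(2) have "real (N * q) = 1"
      by (metis of_nat_mult scaleR_cancel_right)
    then show "N = 1"
      by (simp only: of_nat_eq_1_iff nat_mult_eq_1_iff)
  qed
  moreover have "\<exists>t>0. m0 = t *\<^sub>R s"
    using assms(3,4) by blast
  ultimately show "m0 \<in> M \<and> m0 \<noteq> 0 \<and> indivisible M m0 \<and> (\<exists>t>0. m0 = t *\<^sub>R s)"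
    using assms(1,2) unfolding indivisible_def by blast
next
  fix m assume m: "m \<in> M \<and> m \<noteq> 0 \<and> indivisible M m \<and> (\<exists>t>0. m = t *\<^sub>R s)"
  then obtain q :: nat where "m = real q *\<^sub>R m0"
    using generated by blast
  moreover have "q = 1"
    using m assms(1) \<open>m = real q *\<^sub>R m0\<close> unfolding indivisible_def by blast
  ultimately show "m = m0" by simp
qed

(* For a subgroup M this is M tensor Q, the rational span of M. *)
definition rat_span :: "'a::real_vector set \<Rightarrow> 'a set" where
  "rat_span M = {x. \<exists>n::nat. 0 < n \<and> real n *\<^sub>R x \<in> M}"

lemma linear_integral_on_rat_span:
  assumes "linear g" "integral_on g M" "x \<in> rat_span M"
  shows "g x \<in> \<rat>"
proof -
  obtain n :: nat where n: "0 < n" "real n *\<^sub>R x \<in> M"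
    using assms(3) by (auto simp: rat_span_def)
  then have "real n * g x \<in> \<int>"
    using assms(1,2) by (auto simp: integral_on_def linear_scale)
  then have "real n * g x / real n \<in> \<rat>"
    by (intro Rats_divide) (auto simp: Ints_subset_Rats[THEN subsetD])
  then show ?thesis using n(1) by simp
qed

locale int_submodule =
  fixes M :: "'a::real_vector set"
  assumes zero_mem: "0 \<in> M"
    and add_mem: "x \<in> M \<Longrightarrow> y \<in> M \<Longrightarrow> x + y \<in> M"
    and scaleR_int_mem: "x \<in> M \<Longrightarrow> of_int k *\<^sub>R x \<in> M"
begin

lemma subset_rat_span: "M \<subseteq> rat_span M"
  unfolding rat_span_def by (auto intro: exI[of _ 1])

lemma rat_span_add:
  assumes "x \<in> rat_span M" "y \<in> rat_span M"
  shows "x + y \<in> rat_span M"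
proof -
  obtain m n :: nat where "0 < m" "real m *\<^sub>R x \<in> M" "0 < n" "real n *\<^sub>R y \<in> M"
    using assms by (auto simp: rat_span_def)
  then have "of_int (int n) *\<^sub>R (real m *\<^sub>R x) + of_int (int m) *\<^sub>R (real n *\<^sub>R y) \<in> M"
    by (intro add_mem scaleR_int_mem)
  also have "of_int (int n) *\<^sub>R (real m *\<^sub>R x) + of_int (int m) *\<^sub>R (real n *\<^sub>R y)
      = real (m * n) *\<^sub>R (x + y)"
    by (simp add: algebra_simps)
  finally have "real (m * n) *\<^sub>R (x + y) \<in> M" .
  moreover have "0 < m * n"
    using \<open>0 < m\<close> \<open>0 < n\<close> by simp
  ultimately show ?thesis
    unfolding rat_span_def by blast
qed

lemma rat_span_scaleR:
  assumes "r \<in> \<rat>" "x \<in> rat_span M"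
  shows "r *\<^sub>R x \<in> rat_span M"
proof -
  obtain a :: int and d :: nat where ad: "0 < d" "r = of_int a / real d"
    using assms(1) by (auto simp: Rats_eq_int_div_nat)
  obtain n :: nat where n: "0 < n" "real n *\<^sub>R x \<in> M"
    using assms(2) by (auto simp: rat_span_def)
  have "of_int a *\<^sub>R (real n *\<^sub>R x) \<in> M"
    using n(2) by (rule scaleR_int_mem)
  also have "of_int a *\<^sub>R (real n *\<^sub>R x) = real (d * n) *\<^sub>R (r *\<^sub>R x)"
    using ad by simp
  finally show ?thesis
    unfolding rat_span_def using ad(1) n(1) by (intro CollectI exI[of _ "d * n"]) simp
qed

lemma rat_span_diff: "x \<in> rat_span M \<Longrightarrow> y \<in> rat_span M \<Longrightarrow> x - y \<in> rat_span M"
  using rat_span_add[of x "(-1) *\<^sub>R y"] rat_span_scaleR[of "-1" y] by simp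

lemma rat_span_sum: "(\<And>i. i \<in> I \<Longrightarrow> h i \<in> rat_span M) \<Longrightarrow> sum h I \<in> rat_span M"
  by (induction I rule: infinite_finite_induct)
    (use zero_mem subset_rat_span in \<open>auto intro: rat_span_add\<close>)

lemma rat_span_ray_point:
  assumes "c *\<^sub>R s \<in> rat_span M" "c \<noteq> 0"
  shows "\<exists>t>0. t *\<^sub>R s \<in> M"
proof -
  obtain n :: nat where n: "0 < n" "real n *\<^sub>R (c *\<^sub>R s) \<in> M"
    using assms(1) by (auto simp: rat_span_def)
  have multiples: "(of_int k * (real n * c)) *\<^sub>R s \<in> M" for k
    using scaleR_int_mem[OF n(2), of k] by simp
  show ?thesis
  proof (cases "0 < c")
    case True
    then show ?thesis
      using multiples[of 1] n(1) by (intro exI[of _ "real n * c"]) simp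
  next
    case False
    then have "0 < - (real n * c)"
      using n(1) assms(2) by (simp add: mult_pos_neg)
    then show ?thesis
      using multiples[of "-1"] by (intro exI[of _ "- (real n * c)"]) simp
  qed
qed

lemma least_point_on_discrete_ray:
  assumes "0 < h" and discrete: "\<And>t. 0 < t \<Longrightarrow> t *\<^sub>R s \<in> M \<Longrightarrow> \<exists>k::nat. t = real k * h"
    and "0 < t1" "t1 *\<^sub>R s \<in> M"
  obtains t0 where "0 < t0" "t0 *\<^sub>R s \<in> M"
    and "\<And>m. m \<in> M \<Longrightarrow> \<exists>t>0. m = t *\<^sub>R s \<Longrightarrow> \<exists>q::nat. m = real q *\<^sub>R (t0 *\<^sub>R s)"
proof -
  define K where "K = {k::nat. 0 < k \<and> (real k * h) *\<^sub>R s \<in> M}"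
  have on_ray: "\<exists>k\<in>K. t = real k * h" if t: "0 < t" "t *\<^sub>R s \<in> M" for t
  proof -
    obtain k where "t = real k * h"
      using discrete t by blast
    moreover from this have "0 < k"
      using t(1) by (cases "k = 0") auto
    ultimately show ?thesis
      using t(2) unfolding K_def by blast
  qed
  define k0 where "k0 = (LEAST k. k \<in> K)"
  have "k0 \<in> K"
    using on_ray[OF assms(3,4)] unfolding k0_def by (metis LeastI)
  have k0_le: "k0 \<le> k" if "k \<in> K" for k
    unfolding k0_def using that by (rule Least_le)
  define m0 where "m0 = (real k0 * h) *\<^sub>R s"
  have "m0 \<in> M" "0 < k0"
    using \<open>k0 \<in> K\<close> by (auto simp: K_def m0_def)
  have k0_dvd: "k0 dvd k" if "k \<in> K" for k
  proof -
    have k_eq: "real k = real (k div k0) * real k0 + real (k mod k0)"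
      by (metis div_mult_mod_eq of_nat_add of_nat_mult)
    have "(real (k mod k0) * h) *\<^sub>R s = (real k * h) *\<^sub>R s + of_int (- int (k div k0)) *\<^sub>R m0"
      unfolding m0_def by (subst k_eq) (simp add: algebra_simps)
    also have "\<dots> \<in> M"
      using that \<open>m0 \<in> M\<close> unfolding K_def by (intro add_mem scaleR_int_mem) auto
    finally have "k mod k0 = 0 \<or> k mod k0 \<in> K"
      unfolding K_def by auto
    moreover have "k mod k0 < k0"
      using \<open>0 < k0\<close> by simp
    ultimately show ?thesis
      using k0_le by (meson dvd_eq_mod_eq_0 not_le)
  qed
  show thesis
  proof (rule that)
    show "0 < real k0 * h" "(real k0 * h) *\<^sub>R s \<in> M"
      using \<open>0 < k0\<close> assms(1) \<open>m0 \<in> M\<close> by (auto simp: m0_def)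
  next
    fix m assume "m \<in> M" "\<exists>t>0. m = t *\<^sub>R s"
    then obtain k where "k \<in> K" "m = (real k * h) *\<^sub>R s"
      using on_ray by blast
    moreover obtain q where "k = k0 * q"
      using k0_dvd[OF \<open>k \<in> K\<close>] by blast
    ultimately show "\<exists>q::nat. m = real q *\<^sub>R ((real k0 * h) *\<^sub>R s)"
      by (intro exI[of _ q]) (simp add: algebra_simps)
  qed
qed

end

locale integral_lattice = int_submodule M for M :: "'a::euclidean_space set" +
  assumes inner_Ints: "x \<in> M \<Longrightarrow> y \<in> M \<Longrightarrow> x \<bullet> y \<in> \<int>"
begin

lemma inner_rat_span:
  assumes "x \<in> rat_span M" "y \<in> rat_span M"
  shows "x \<bullet> y \<in> \<rat>"
proof -
  obtain n :: nat where "0 < n" "real n *\<^sub>R x \<in> M"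
    using assms(1) by (auto simp: rat_span_def)
  moreover have "linear ((\<bullet>) (real n *\<^sub>R x))"
    by (simp add: bounded_linear.linear bounded_linear_inner_right)
  ultimately have "(real n *\<^sub>R x) \<bullet> y \<in> \<rat>"
    using assms(2) inner_Ints linear_integral_on_rat_span unfolding integral_on_def by blast
  then have "(real n *\<^sub>R x) \<bullet> y / real n \<in> \<rat>"
    by (intro Rats_divide) auto
  then show ?thesis using \<open>0 < n\<close> by simp
qed

lemma rat_span_Gram_Schmidt:
  assumes "finite T" "T \<subseteq> rat_span M"
  shows "\<exists>E\<subseteq>rat_span M. pairwise orthogonal E \<and> span E = span T"
  using assms
proof (induction T rule: finite_induct)
  case empty
  then show ?case by auto
next
  case (insert v T)
  then obtain E where E: "E \<subseteq> rat_span M" "pairwise orthogonal E" "span E = span T"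
    by auto
  define v' where "v' = v - (\<Sum>e\<in>E. (e \<bullet> v / (e \<bullet> e)) *\<^sub>R e)"
  have "v' \<in> rat_span M"
    unfolding v'_def using E(1) insert.prems
    by (intro rat_span_diff rat_span_sum rat_span_scaleR Rats_divide inner_rat_span) auto
  moreover have "pairwise orthogonal (insert v' E)"
    using E(2) Gram_Schmidt_step[OF E(2) span_base]
    by (intro pairwise_orthogonal_insert) (auto simp: v'_def orthogonal_commute)
  moreover have "span (insert v' E) = span (insert v E)"
    unfolding v'_def by (intro eq_span_insert_eq) (simp add: span_neg span_sum span_scale span_base)
  moreover have "span (insert v E) = span (insert v T)"
    using E(3) by (simp add: set_eq_iff span_breakdown_eq)
  ultimately show ?case
    using E(1) by (intro exI[of _ "insert v' E"]) auto
qed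

lemma rat_span_orthogonal_projection:
  assumes "finite U" "U \<subseteq> rat_span M" "x \<in> rat_span M"
  shows "\<exists>p\<in>rat_span M. p \<in> span U \<and> (\<forall>u\<in>U. (x - p) \<bullet> u = 0)"
proof -
  obtain E where E: "E \<subseteq> rat_span M" "pairwise orthogonal E" "span E = span U"
    using rat_span_Gram_Schmidt[OF assms(1,2)] by blast
  define p where "p = (\<Sum>e\<in>E. (e \<bullet> x / (e \<bullet> e)) *\<^sub>R e)"
  have "p \<in> rat_span M"
    unfolding p_def using E(1) assms(3)
    by (intro rat_span_sum rat_span_scaleR Rats_divide inner_rat_span) auto
  moreover have "p \<in> span U"
    unfolding p_def E(3)[symmetric] by (intro span_sum span_scale span_base)
  moreover have "(x - p) \<bullet> u = 0" if "u \<in> U" for u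
  proof -
    have "u \<in> span E" using that E(3) span_base by blast
    then show ?thesis
      using Gram_Schmidt_step[OF E(2) \<open>u \<in> span E\<close>, of x]
      by (simp add: p_def orthogonal_def inner_commute)
  qed
  ultimately show ?thesis by blast
qed

lemma rat_span_gradient:
  assumes "span M = UNIV" "linear g" "integral_on g M"
  shows "\<exists>w\<in>rat_span M. \<forall>x. g x = w \<bullet> x"
proof -
  obtain B where B: "B \<subseteq> M" "independent B" "M \<subseteq> span B"
    by (rule basis_exists)
  have "span B = UNIV"
    using assms(1) span_mono[OF B(3)] by (simp add: span_span top.extremum_unique)
  then obtain E where E: "E \<subseteq> rat_span M" "pairwise orthogonal E" "span E = UNIV"
    using rat_span_Gram_Schmidt[of B] B(1,2) subset_rat_span finiteI_independent by fastforce
  define w where "w = (\<Sum>e\<in>E. (g e / (e \<bullet> e)) *\<^sub>R e)"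
  have "w \<in> rat_span M"
    unfolding w_def using E(1) assms(2,3)
    by (intro rat_span_sum rat_span_scaleR Rats_divide inner_rat_span linear_integral_on_rat_span) auto
  moreover have "g x = w \<bullet> x" for x
  proof -
    have "g x = g (\<Sum>e\<in>E. (e \<bullet> x / (e \<bullet> e)) *\<^sub>R e)"
      using orthogonal_expansion[OF E(2), of x] E(3) by simp
    also have "\<dots> = (\<Sum>e\<in>E. (e \<bullet> x / (e \<bullet> e)) * g e)"
      using assms(2) by (simp add: linear_sum linear_scale)
    also have "\<dots> = w \<bullet> x"
      unfolding w_def inner_sum_left by (intro sum.cong) (auto simp: inner_commute)
    finally show ?thesis .
  qed
  ultimately show ?thesis by blast
qed

lemma points_on_ray_discrete:
  assumes "s \<noteq> 0" "0 < t1" "t1 *\<^sub>R s \<in> M"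
  shows "\<exists>h>0. \<forall>t>0. t *\<^sub>R s \<in> M \<longrightarrow> (\<exists>k::nat. t = real k * h)"
proof -
  define h where "h = 1 / (t1 * (s \<bullet> s))"
  have "0 < h"
    using assms(1,2) by (simp add: h_def)
  moreover have "\<exists>k::nat. t = real k * h" if "0 < t" "t *\<^sub>R s \<in> M" for t
  proof -
    from that(2) assms(3) have "(t *\<^sub>R s) \<bullet> (t1 *\<^sub>R s) \<in> \<int>"
      by (rule inner_Ints)
    also have "(t *\<^sub>R s) \<bullet> (t1 *\<^sub>R s) = t / h"
      by (simp add: h_def)
    finally obtain j where "t / h = of_int j"
      by (elim Ints_cases)
    moreover have "0 < t / h"
      using \<open>0 < t\<close> \<open>0 < h\<close> by simp
    ultimately have "t = real (nat j) * h"
      using \<open>0 < h\<close> by (simp add: field_simps)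
    then show ?thesis ..
  qed
  ultimately show ?thesis by auto
qed

lemma unique_indivisible_on_ray:
  assumes "s \<noteq> 0" "0 < t1" "t1 *\<^sub>R s \<in> M"
  shows "\<exists>!m. m \<in> M \<and> m \<noteq> 0 \<and> indivisible M m \<and> (\<exists>t>0. m = t *\<^sub>R s)"
proof -
  obtain h where "0 < h" "\<And>t. 0 < t \<Longrightarrow> t *\<^sub>R s \<in> M \<Longrightarrow> \<exists>k::nat. t = real k * h"
    using points_on_ray_discrete[OF assms] by blast
  then obtain t0 where "0 < t0" "t0 *\<^sub>R s \<in> M"
    and "\<And>m. m \<in> M \<Longrightarrow> \<exists>t>0. m = t *\<^sub>R s \<Longrightarrow> \<exists>q::nat. m = real q *\<^sub>R (t0 *\<^sub>R s)"
    using least_point_on_discrete_ray assms(2,3) by blast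
  moreover have "t0 *\<^sub>R s \<noteq> 0"
    using assms(1) \<open>0 < t0\<close> by simp
  ultimately show ?thesis
    by (intro unique_indivisible_on_ray_generated[OF _ _ _ refl])
qed

lemma sphere_minimizer_scaled_in_rat_span:
  fixes f :: "'a \<Rightarrow> real" and G :: "('a \<Rightarrow> real) set"
  assumes "span M = UNIV" "finite G" "\<forall>g\<in>G. linear g \<and> integral_on g M"
    and "\<sigma> = {x. \<forall>g\<in>G. 0 \<le> g x}" "linear f" "integral_on f M"
    and "s \<in> \<sigma>" "norm s = 1" "\<forall>x\<in>\<sigma>. f s * norm x \<le> f x"
  shows "f s *\<^sub>R s \<in> rat_span M"
proof -
  define A where "A = {g\<in>G. g s = 0}"
  have "\<forall>g\<in>A. \<exists>u\<in>rat_span M. \<forall>x. g x = u \<bullet> x"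
    using assms(1,3) rat_span_gradient unfolding A_def by blast
  then obtain u where u: "\<And>g. g \<in> A \<Longrightarrow> u g \<in> rat_span M"
    "\<And>g x. g \<in> A \<Longrightarrow> g x = u g \<bullet> x"
    by metis
  obtain w where w: "w \<in> rat_span M" "\<And>x. f x = w \<bullet> x"
    using rat_span_gradient[OF assms(1,5,6)] by blast
  obtain p where p: "p \<in> rat_span M" "p \<in> span (u ` A)" "\<forall>y\<in>u ` A. (w - p) \<bullet> y = 0"
    using rat_span_orthogonal_projection[of "u ` A" w] assms(2) u(1) w(1) by (auto simp: A_def)
  have "w - p = f s *\<^sub>R s"
  proof (rule orthogonal_residual_eq_scaled[OF _ _ p(2,3)])
    show "\<forall>v. (\<forall>y\<in>u ` A. y \<bullet> v = 0) \<longrightarrow> w \<bullet> v = f s * (s \<bullet> v)"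
    proof (intro allI impI)
      fix v assume "\<forall>y\<in>u ` A. y \<bullet> v = 0"
      then have "\<forall>g\<in>G. g s = 0 \<longrightarrow> g v = 0"
        using u(2) unfolding A_def by auto
      moreover have "\<forall>g\<in>G. linear g"
        using assms(3) by blast
      ultimately have "f v = f s * (s \<bullet> v)"
        using assms(2,4,5,7,8,9) by (intro polyhedral_cone_sphere_minimizer_first_order)
      then show "w \<bullet> v = f s * (s \<bullet> v)"
        using w(2) by simp
    qed
    show "\<forall>y\<in>u ` A. y \<bullet> s = 0"
      using u(2) unfolding A_def by (auto simp: inner_commute)
  qed
  then show ?thesis
    using rat_span_diff[OF w(1) p(1)] by simp
qed

end

lemma full_lattice_integral_lattice:
  assumes "full_lattice M" "\<forall>x\<in>M. \<forall>y\<in>M. x \<bullet> y \<in> \<int>"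
  shows "integral_lattice M"
proof -
  obtain B where M: "M = {x. \<exists>c::'a \<Rightarrow> int. x = (\<Sum>b\<in>B. of_int (c b) *\<^sub>R b)}"
    using assms(1) unfolding full_lattice_def by blast
  show ?thesis
  proof unfold_locales
    show "0 \<in> M"
      unfolding M by (auto intro!: exI[of _ "\<lambda>_. 0"])
    show "x + y \<in> M" if xy: "x \<in> M" "y \<in> M" for x y
    proof -
      obtain c d :: "'a \<Rightarrow> int"
        where "x = (\<Sum>b\<in>B. of_int (c b) *\<^sub>R b)" "y = (\<Sum>b\<in>B. of_int (d b) *\<^sub>R b)"
        using xy unfolding M by blast
      then show ?thesis
        unfolding M by (intro CollectI exI[of _ "\<lambda>b. c b + d b"]) (simp add: sum.distrib scaleR_add_left)
    qed
    show "of_int k *\<^sub>R x \<in> M" if x: "x \<in> M" for x k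
    proof -
      obtain c :: "'a \<Rightarrow> int" where "x = (\<Sum>b\<in>B. of_int (c b) *\<^sub>R b)"
        using x unfolding M by blast
      then show ?thesis
        unfolding M by (intro CollectI exI[of _ "\<lambda>b. k * c b"]) (simp add: scaleR_sum_right)
    qed
  qed (use assms(2) in blast)
qed

lemma full_lattice_span: "full_lattice M \<Longrightarrow> span M = UNIV"
  unfolding full_lattice_def
proof (elim exE conjE)
  fix B assume B: "independent B" "span B = UNIV"
    and M: "M = {x. \<exists>c::'a \<Rightarrow> int. x = (\<Sum>b\<in>B. of_int (c b) *\<^sub>R b)}"
  have "b \<in> M" if "b \<in> B" for b
    unfolding M using that finiteI_independent[OF B(1)]
    by (intro CollectI exI[of _ "\<lambda>b'. if b' = b then 1 else 0"])
      (simp add: if_distrib[of real_of_int] if_distrib[of "\<lambda>r. r *\<^sub>R _"] cong: if_cong)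
  then have "span B \<subseteq> span M"
    by (intro span_mono) blast
  then show "span M = UNIV"
    using B(2) by auto
qed

theorem corollary2p3:
  fixes M \<sigma> :: "'a::euclidean_space set" and f :: "'a \<Rightarrow> real" and s :: 'a
  assumes "full_lattice M"
    and "\<forall>x\<in>M. \<forall>y\<in>M. x \<bullet> y \<in> \<int>"
    and "rational_polyhedral_cone M \<sigma>"
    and "linear f" and "integral_on f M"
    and "\<exists>x\<in>\<sigma>. f x < 0"
    and "s \<in> sphere 0 1 \<inter> \<sigma>"
    and "\<forall>y\<in>sphere 0 1 \<inter> \<sigma>. f s \<le> f y"
  shows "\<exists>!m. m \<in> M \<and> m \<noteq> 0 \<and> indivisible M m \<and> (\<exists>t>0. m = t *\<^sub>R s)"
proof -
  interpret integral_lattice M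
    using assms(1,2) by (rule full_lattice_integral_lattice)
  obtain G where G: "finite G" "\<forall>g\<in>G. linear g \<and> integral_on g M" "\<sigma> = {x. \<forall>g\<in>G. 0 \<le> g x}"
    using assms(3) unfolding rational_polyhedral_cone_def by blast
  have "cone \<sigma>"
    using G(2,3) unfolding cone_def by (auto simp: linear_scale)
  then have bound: "\<forall>x\<in>\<sigma>. f s * norm x \<le> f x"
    using assms(4,8) cone_sphere_minimizer_bound by blast
  have "f s < 0"
    using assms(6) bound by (meson le_less_trans mult_nonneg_nonneg norm_ge_zero not_less)
  have s: "s \<in> \<sigma>" "norm s = 1" "s \<noteq> 0"
    using assms(7) by auto
  have rational: "f s *\<^sub>R s \<in> rat_span M"
    using full_lattice_span[OF assms(1)] G assms(4,5) s(1,2) bound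
    by (rule sphere_minimizer_scaled_in_rat_span)
  then obtain t1 where "0 < t1" "t1 *\<^sub>R s \<in> M"
    using rat_span_ray_point[OF rational] \<open>f s < 0\<close> by auto
  then show ?thesis
    by (rule unique_indivisible_on_ray[OF s(3)])
qed

end
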